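(* Let $\mathcal{X}$ be an $n$-premaniplex and $(\mathcal{Y},\eta)$ an $(n,m)$-voltage operator. Let $\tau\in\operatorname{Aut}(\mathcal{Y})$ be such that there exists a group homomorphism $\tau^\#:\mathcal{C}^n\to\mathcal{C}^n$ with $\tau^\#(\eta(W))=\eta(W\tau)$ for every $W\in\Pi(\mathcal{Y})$, and suppose that $\mathcal{X}^{\tau^\#}$ is isomorphic to $\mathcal{X}$. Then $\tau$ lifts to $\mathcal{X}\rtimes_\eta\mathcal{Y}$.
   Context: An $n$-premaniplex is an edge-coloured graph (semi-edges and parallel edges allowed) with colours $\{0,\dots,n-1\}$ such that every vertex (flag) is the start of exactly one dart of each colour, and for $|i-j|\ge2$ alternating $i,j$-paths of length 4 are closed; $x^i$ is the $i$-adjacent flag of $x$. $\mathcal{C}^n=\langle r_0,\dots,r_{n-1}\mid r_i^2,\ (r_ir_j)^2\ (|i-j|\ge2)\rangle$ acts on the left on flags by $r_ix=x^i$. Isomorphisms are bijections on flags preserving all adjacencies; automorphisms act on the right and map paths to paths, $W\mapsto W\tau$. For a flag $y$ of an $m$-premaniplex $\mathcal{Y}$ and $\omega\in\mathcal{C}^m$, $W_\omega(y)$ is the homotopy class of paths from $y$ whose colour sequence $i_1,\dots,i_k$ satisfies $r_{i_k}\cdots r_{i_1}=\omega$; these form the fundamental groupoid $\Pi(\mathcal{Y})$. A voltage assignment $\eta:\Pi(\mathcal{Y})\to\mathcal{C}^n$ satisfies $\eta(W_1W_2)=\eta(W_2)\eta(W_1)$; $(\mathcal{Y},\eta)$ is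 an $(n,m)$-voltage operator. $\mathcal{X}\rtimes_\eta\mathcal{Y}$ has flags $\mathcal{X}\times\mathcal{Y}$ and $(x,y)^i=(\eta(W_{r_i}(y))x,r_iy)$, $i\in\{0,\dots,m-1\}$. $\mathcal{X}^{\tau^\#}$ is the $n$-premaniplex with the flags of $\mathcal{X}$ in which the $i$-adjacent flag of $x$ is $\tau^\#(r_i)x$. $\tau\in\operatorname{Aut}(\mathcal{Y})$ lifts to $\mathcal{X}\rtimes_\eta\mathcal{Y}$ if there is $\tilde\tau\in\operatorname{Aut}(\mathcal{X}\rtimes_\eta\mathcal{Y})$ such that the $\mathcal{Y}$-coordinate of $(x,y)\tilde\tau$ is $y\tau$ for all $(x,y)$. *)

theory Defs
  imports "HOL-Algebra.Group"
begin

text \<open>Words over the generators r_0..r_{n-1} are lists of colours; the word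
 [a1,...,ak] represents the product r_a1 r_a2 ... r_ak.  ceq n is the
 congruence generated by the defining relations of C^n.\<close>

inductive ceq :: "nat \<Rightarrow> nat list \<Rightarrow> nat list \<Rightarrow> bool" for n :: nat where
  ceq_refl: "ceq n w w"
| ceq_sym: "ceq n v w \<Longrightarrow> ceq n w v"
| ceq_trans: "ceq n u v \<Longrightarrow> ceq n v w \<Longrightarrow> ceq n u w"
| ceq_inv: "i < n \<Longrightarrow> ceq n (u @ [i, i] @ v) (u @ v)"
| ceq_comm: "i < n \<Longrightarrow> j < n \<Longrightarrow> (i + 2 \<le> j \<or> j + 2 \<le> i) \<Longrightarrow>
      ceq n (u @ [i, j, i, j] @ v) (u @ v)"

definition cox_words :: "nat \<Rightarrow> nat list set" where
  "cox_words n = {w. set w \<subseteq> {..<n}}"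

definition ceq_rel :: "nat \<Rightarrow> (nat list \<times> nat list) set" where
  "ceq_rel n = {(v, w). ceq n v w}"

definition Cox :: "nat \<Rightarrow> nat list set monoid" where
  "Cox n = \<lparr> carrier = cox_words n // ceq_rel n,
             mult = (\<lambda>A B. {w. \<exists>a\<in>A. \<exists>b\<in>B. ceq n (a @ b) w}),
             one = ceq_rel n `` {[]} \<rparr>"

definition cox_gen :: "nat \<Rightarrow> nat \<Rightarrow> nat list set" where
  "cox_gen n i = ceq_rel n `` {[i]}"

text \<open>An n-premaniplex: flag set F, and adj i x = x^i (the i-adjacent flag).\<close>
definition premaniplex :: "nat \<Rightarrow> 'a set \<Rightarrow> (nat \<Rightarrow> 'a \<Rightarrow> 'a) \<Rightarrow> bool" where
  "premaniplex n F adj \<longleftrightarrow>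
     (\<forall>i<n. \<forall>x\<in>F. adj i x \<in> F \<and> adj i (adj i x) = x) \<and>
     (\<forall>i<n. \<forall>j<n. (i + 2 \<le> j \<or> j + 2 \<le> i) \<longrightarrow>
        (\<forall>x\<in>F. adj i (adj j (adj i (adj j x))) = x))"

definition word_act :: "(nat \<Rightarrow> 'a \<Rightarrow> 'a) \<Rightarrow> nat list \<Rightarrow> 'a \<Rightarrow> 'a" where
  "word_act adj w x = foldr adj w x"

definition cox_act :: "(nat \<Rightarrow> 'a \<Rightarrow> 'a) \<Rightarrow> nat list set \<Rightarrow> 'a \<Rightarrow> 'a" where
  "cox_act adj \<omega> x = word_act adj (SOME w. w \<in> \<omega>) x"

definition premaniplex_iso ::
  "nat \<Rightarrow> 'a set \<Rightarrow> (nat \<Rightarrow> 'a \<Rightarrow> 'a) \<Rightarrow> 'b set \<Rightarrow> (nat \<Rightarrow> 'b \<Rightarrow> 'b) \<Rightarrow> ('a \<Rightarrow> 'b) \<Rightarrow> bool" where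
  "premaniplex_iso n F1 adj1 F2 adj2 \<phi> \<longleftrightarrow>
     bij_betw \<phi> F1 F2 \<and> (\<forall>i<n. \<forall>x\<in>F1. \<phi> (adj1 i x) = adj2 i (\<phi> x))"

definition premaniplex_isomorphic ::
  "nat \<Rightarrow> 'a set \<Rightarrow> (nat \<Rightarrow> 'a \<Rightarrow> 'a) \<Rightarrow> 'b set \<Rightarrow> (nat \<Rightarrow> 'b \<Rightarrow> 'b) \<Rightarrow> bool" where
  "premaniplex_isomorphic n F1 adj1 F2 adj2 \<longleftrightarrow> (\<exists>\<phi>. premaniplex_iso n F1 adj1 F2 adj2 \<phi>)"

text \<open>Automorphisms act on the right: y\<tau> is written tau y.\<close>
definition premaniplex_aut :: "nat \<Rightarrow> 'a set \<Rightarrow> (nat \<Rightarrow> 'a \<Rightarrow> 'a) \<Rightarrow> ('a \<Rightarrow> 'a) \<Rightarrow> bool" where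
  "premaniplex_aut n F adj \<tau> \<longleftrightarrow> premaniplex_iso n F adj F adj \<tau>"

text \<open>The homotopy class W_\<omega>(y) is represented by the pair (y, \<omega>).\<close>
definition fund_groupoid :: "nat \<Rightarrow> 'b set \<Rightarrow> ('b \<times> nat list set) set" where
  "fund_groupoid m F = F \<times> carrier (Cox m)"

definition path_start :: "'b \<times> nat list set \<Rightarrow> 'b" where
  "path_start W = fst W"

definition path_end :: "(nat \<Rightarrow> 'b \<Rightarrow> 'b) \<Rightarrow> 'b \<times> nat list set \<Rightarrow> 'b" where
  "path_end adj W = cox_act adj (snd W) (fst W)"

text \<open>Concatenation W_{\<omega>1}(y) W_{\<omega>2}(\<omega>1 y) = W_{\<omega>2 \<omega>1}(y).\<close>
definition path_comp :: "nat \<Rightarrow> 'b \<times> nat list set \<Rightarrow> 'b \<times> nat list set \<Rightarrow> 'b \<times> nat list set" where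
  "path_comp m W1 W2 = (fst W1, snd W2 \<otimes>\<^bsub>Cox m\<^esub> snd W1)"

definition path_map :: "('b \<Rightarrow> 'b) \<Rightarrow> 'b \<times> nat list set \<Rightarrow> 'b \<times> nat list set" where
  "path_map \<tau> W = (\<tau> (fst W), snd W)"

definition voltage_assignment ::
  "nat \<Rightarrow> nat \<Rightarrow> 'b set \<Rightarrow> (nat \<Rightarrow> 'b \<Rightarrow> 'b) \<Rightarrow> ('b \<times> nat list set \<Rightarrow> nat list set) \<Rightarrow> bool" where
  "voltage_assignment n m F adj \<eta> \<longleftrightarrow>
     (\<forall>W\<in>fund_groupoid m F. \<eta> W \<in> carrier (Cox n)) \<and>
     (\<forall>W1\<in>fund_groupoid m F. \<forall>W2\<in>fund_groupoid m F.
        path_end adj W1 = path_start W2 \<longrightarrow>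
        \<eta> (path_comp m W1 W2) = \<eta> W2 \<otimes>\<^bsub>Cox n\<^esub> \<eta> W1)"

definition voltage_operator ::
  "nat \<Rightarrow> nat \<Rightarrow> 'b set \<Rightarrow> (nat \<Rightarrow> 'b \<Rightarrow> 'b) \<Rightarrow> ('b \<times> nat list set \<Rightarrow> nat list set) \<Rightarrow> bool" where
  "voltage_operator n m F adj \<eta> \<longleftrightarrow> premaniplex m F adj \<and> voltage_assignment n m F adj \<eta>"

text \<open>(x,y)^i = (\<eta>(W_{r_i}(y)) x, r_i y); flags are FX \<times> FY.\<close>
definition prod_adj ::
  "nat \<Rightarrow> (nat \<Rightarrow> 'a \<Rightarrow> 'a) \<Rightarrow> (nat \<Rightarrow> 'b \<Rightarrow> 'b) \<Rightarrow> ('b \<times> nat list set \<Rightarrow> nat list set)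
     \<Rightarrow> nat \<Rightarrow> 'a \<times> 'b \<Rightarrow> 'a \<times> 'b" where
  "prod_adj m adjX adjY \<eta> i p =
     (cox_act adjX (\<eta> (snd p, cox_gen m i)) (fst p), adjY i (snd p))"

text \<open>In X^{\<tau>#}, the i-adjacent flag of x is \<tau>#(r_i) x.\<close>
definition twist_adj ::
  "nat \<Rightarrow> (nat \<Rightarrow> 'a \<Rightarrow> 'a) \<Rightarrow> (nat list set \<Rightarrow> nat list set) \<Rightarrow> nat \<Rightarrow> 'a \<Rightarrow> 'a" where
  "twist_adj n adjX tsharp i x = cox_act adjX (tsharp (cox_gen n i)) x"

definition lifts ::
  "nat \<Rightarrow> 'a set \<Rightarrow> (nat \<Rightarrow> 'a \<Rightarrow> 'a) \<Rightarrow> 'b set \<Rightarrow> (nat \<Rightarrow> 'b \<Rightarrow> 'b)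
     \<Rightarrow> ('b \<times> nat list set \<Rightarrow> nat list set) \<Rightarrow> ('b \<Rightarrow> 'b) \<Rightarrow> bool" where
  "lifts m FX adjX FY adjY \<eta> \<tau> \<longleftrightarrow>
     (\<exists>\<tau>'. premaniplex_aut m (FX \<times> FY) (prod_adj m adjX adjY \<eta>) \<tau>' \<and>
           (\<forall>x\<in>FX. \<forall>y\<in>FY. snd (\<tau>' (x, y)) = \<tau> y))"

end

theory Submission
  imports Defs
begin

text \<open>Let \<phi> be an isomorphism from X^(\<tau>#) to X and \<psi> its inverse. Since \<tau># is
 a homomorphism, C^n acts on X^(\<tau>#) through \<tau>#, so \<psi>(\<omega> x) = \<tau>#(\<omega>) \<psi>(x) for
 every \<omega> in C^n. The lift of \<tau> is then (x, y) \<mapsto> (\<psi> x, y\<tau>): it sends the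
 i-adjacent flag (\<eta>(W) x, r_i y), where W = W_(r_i)(y), to (\<tau>#(\<eta>(W)) \<psi>(x), r_i (y\<tau>)),
 and \<tau>#(\<eta>(W)) = \<eta>(W\<tau>) = \<eta>(W_(r_i)(y\<tau>)).\<close>

lemma ceq_alphabet: "ceq n v w \<Longrightarrow> set v \<subseteq> {..<n} \<longleftrightarrow> set w \<subseteq> {..<n}"
  by (induction rule: ceq.induct) auto

lemma ceq_append_context: "ceq n v w \<Longrightarrow> ceq n (u @ v @ u') (u @ w @ u')"
proof (induction rule: ceq.induct)
  case (ceq_inv i a b)
  then show ?case using ceq.ceq_inv[of i n "u @ a" "b @ u'"] by simp
next
  case (ceq_comm i j a b)
  then show ?case using ceq.ceq_comm[of i n j "u @ a" "b @ u'"] by simp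
qed (blast intro: ceq.intros)+

lemma ceq_append: "ceq n a a' \<Longrightarrow> ceq n b b' \<Longrightarrow> ceq n (a @ b) (a' @ b')"
  using ceq_append_context[of n a a' "[]" b] ceq_append_context[of n b b' a' "[]"]
  by (auto intro: ceq_trans)

definition cls :: "nat \<Rightarrow> nat list \<Rightarrow> nat list set" where
  "cls n w = ceq_rel n `` {w}"

lemma mem_cls_iff: "v \<in> cls n w \<longleftrightarrow> ceq n w v"
  by (simp add: cls_def ceq_rel_def)

lemma carrier_Cox_iff: "A \<in> carrier (Cox n) \<longleftrightarrow> (\<exists>w. set w \<subseteq> {..<n} \<and> A = cls n w)"
  by (auto simp: Cox_def quotient_def cox_words_def cls_def)

lemma cls_in_carrier: "set w \<subseteq> {..<n} \<Longrightarrow> cls n w \<in> carrier (Cox n)"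
  using carrier_Cox_iff by blast

lemma cox_gen_eq_cls: "cox_gen n i = cls n [i]"
  by (simp add: cox_gen_def cls_def)

lemma Cox_mult_cls: "cls n a \<otimes>\<^bsub>Cox n\<^esub> cls n b = cls n (a @ b)"
proof -
  have "{w. \<exists>a'\<in>cls n a. \<exists>b'\<in>cls n b. ceq n (a' @ b') w} = cls n (a @ b)"
  proof (intro equalityI subsetI)
    fix w assume "w \<in> {w. \<exists>a'\<in>cls n a. \<exists>b'\<in>cls n b. ceq n (a' @ b') w}"
    then obtain a' b' where "ceq n a a'" "ceq n b b'" "ceq n (a' @ b') w"
      by (auto simp: mem_cls_iff)
    then show "w \<in> cls n (a @ b)" by (metis ceq_append ceq_trans mem_cls_iff)
  next
    fix w assume "w \<in> cls n (a @ b)"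
    then have "ceq n (a @ b) w" by (simp add: mem_cls_iff)
    moreover have "a \<in> cls n a" "b \<in> cls n b" by (simp_all add: mem_cls_iff ceq_refl)
    ultimately show "w \<in> {w. \<exists>a'\<in>cls n a. \<exists>b'\<in>cls n b. ceq n (a' @ b') w}"
      by blast
  qed
  then show ?thesis by (simp add: Cox_def)
qed

lemma word_act_Cons: "word_act adj (i # w) x = adj i (word_act adj w x)"
  by (simp add: word_act_def)

lemma word_act_append: "word_act adj (a @ b) x = word_act adj a (word_act adj b x)"
  by (simp add: word_act_def)

lemma word_act_closed:
  assumes "premaniplex n F adj" "set w \<subseteq> {..<n}" "x \<in> F"
  shows "word_act adj w x \<in> F"
  using assms(2,3)
  by (induction w) (use assms(1) in \<open>auto simp: word_act_def premaniplex_def\<close>)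

lemma word_act_ceq:
  assumes P: "premaniplex n F adj"
  shows "ceq n v w \<Longrightarrow> set v \<subseteq> {..<n} \<Longrightarrow> x \<in> F \<Longrightarrow> word_act adj v x = word_act adj w x"
proof (induction arbitrary: x rule: ceq.induct)
  case (ceq_sym v w)
  then show ?case using ceq_alphabet by metis
next
  case (ceq_trans a b c)
  then show ?case using ceq_alphabet by metis
next
  case (ceq_inv i a b)
  have "word_act adj b x \<in> F" using word_act_closed[OF P _ ceq_inv(3), of b] ceq_inv(2) by auto
  then show ?case using P ceq_inv(1) by (simp add: word_act_append premaniplex_def word_act_def)
next
  case (ceq_comm i j a b)
  have "word_act adj b x \<in> F" using word_act_closed[OF P _ ceq_comm(5), of b] ceq_comm(4) by auto
  moreover have "\<forall>z\<in>F. adj i (adj j (adj i (adj j z))) = z"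
    using P ceq_comm(1-3) unfolding premaniplex_def by blast
  ultimately show ?case by (simp add: word_act_append word_act_def)
qed simp

lemma word_act_inj:
  assumes P: "premaniplex n F adj"
  shows "set w \<subseteq> {..<n} \<Longrightarrow> x \<in> F \<Longrightarrow> y \<in> F \<Longrightarrow> word_act adj w x = word_act adj w y \<Longrightarrow> x = y"
proof (induction w)
  case (Cons i w)
  have "word_act adj w x \<in> F" "word_act adj w y \<in> F"
    using word_act_closed[OF P] Cons.prems by auto
  moreover have "adj i (adj i (word_act adj w x)) = adj i (adj i (word_act adj w y))"
    using Cons.prems(4) by (simp add: word_act_Cons)
  ultimately have "word_act adj w x = word_act adj w y"
    using P Cons.prems(1) by (simp add: premaniplex_def)
  then show ?case using Cons by auto
qed (simp add: word_act_def)

lemma cox_act_cls: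
  assumes P: "premaniplex n F adj" and "set w \<subseteq> {..<n}" "x \<in> F"
  shows "cox_act adj (cls n w) x = word_act adj w x"
proof -
  have "w \<in> cls n w" by (simp add: mem_cls_iff ceq_refl)
  then have "ceq n w (SOME v. v \<in> cls n w)" by (metis someI mem_cls_iff)
  then show ?thesis unfolding cox_act_def using word_act_ceq[OF P] assms(2,3) by simp
qed

lemma cox_act_closed:
  assumes P: "premaniplex n F adj" and "A \<in> carrier (Cox n)" "x \<in> F"
  shows "cox_act adj A x \<in> F"
  using assms carrier_Cox_iff cox_act_cls[OF P] word_act_closed[OF P] by metis

lemma cox_act_mult:
  assumes P: "premaniplex n F adj" and A: "A \<in> carrier (Cox n)" and B: "B \<in> carrier (Cox n)"
    and x: "x \<in> F"
  shows "cox_act adj (A \<otimes>\<^bsub>Cox n\<^esub> B) x = cox_act adj A (cox_act adj B x)"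
proof -
  obtain a b where a: "set a \<subseteq> {..<n}" "A = cls n a" and b: "set b \<subseteq> {..<n}" "B = cls n b"
    using A B carrier_Cox_iff by metis
  have "word_act adj b x \<in> F" using word_act_closed[OF P b(1) x] .
  then show ?thesis using a b x by (simp add: Cox_mult_cls cox_act_cls[OF P] word_act_append)
qed

lemma cox_act_inj:
  assumes P: "premaniplex n F adj" and "A \<in> carrier (Cox n)" "x \<in> F" "y \<in> F"
    and "cox_act adj A x = cox_act adj A y"
  shows "x = y"
  using assms carrier_Cox_iff cox_act_cls[OF P] word_act_inj[OF P] by metis

text \<open>This replaces the fact that homomorphisms preserve the identity, for which
 one would first have to show that Cox n is a group.\<close>
lemma cox_act_idem:
  assumes P: "premaniplex n F adj" and e: "e \<in> carrier (Cox n)" "e \<otimes>\<^bsub>Cox n\<^esub> e = e"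
    and x: "x \<in> F"
  shows "cox_act adj e x = x"
proof -
  have "cox_act adj e (cox_act adj e x) = cox_act adj e x"
    using cox_act_mult[OF P e(1) e(1) x] e(2) by simp
  then show ?thesis using cox_act_inj[OF P e(1) cox_act_closed[OF P e(1) x] x] by simp
qed

lemma premaniplex_iso_inv_into:
  assumes iso: "premaniplex_iso n F1 adj1 F2 adj2 \<phi>"
    and closed: "\<And>i x. i < n \<Longrightarrow> x \<in> F1 \<Longrightarrow> adj1 i x \<in> F1"
  shows "premaniplex_iso n F2 adj2 F1 adj1 (inv_into F1 \<phi>)"
  unfolding premaniplex_iso_def
proof (intro conjI allI impI ballI)
  have bij: "bij_betw \<phi> F1 F2" using iso by (simp add: premaniplex_iso_def)
  then show "bij_betw (inv_into F1 \<phi>) F2 F1" by (rule bij_betw_inv_into)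
  fix i y assume i: "i < n" and y: "y \<in> F2"
  define x where "x = inv_into F1 \<phi> y"
  have x: "x \<in> F1" "\<phi> x = y"
    using bij y by (auto simp: x_def bij_betw_def intro: inv_into_into f_inv_into_f)
  have "\<phi> (adj1 i x) = adj2 i y" using iso i x by (simp add: premaniplex_iso_def)
  then show "inv_into F1 \<phi> (adj2 i y) = adj1 i (inv_into F1 \<phi> y)"
    using bij closed[OF i x(1)] by (metis bij_betw_def inv_into_f_f x_def)
qed

lemma premaniplex_iso_word_act:
  assumes iso: "premaniplex_iso n F1 adj1 F2 adj2 \<phi>" and P: "premaniplex n F1 adj1"
  shows "set w \<subseteq> {..<n} \<Longrightarrow> x \<in> F1 \<Longrightarrow> \<phi> (word_act adj1 w x) = word_act adj2 w (\<phi> x)"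
proof (induction w)
  case (Cons i w)
  have "word_act adj1 w x \<in> F1" using word_act_closed[OF P] Cons.prems by auto
  then show ?case using iso Cons by (simp add: premaniplex_iso_def word_act_Cons)
qed (simp add: word_act_def)

context
  fixes n :: nat and FX :: "'a set" and adjX :: "nat \<Rightarrow> 'a \<Rightarrow> 'a"
    and tsharp :: "nat list set \<Rightarrow> nat list set"
  assumes X: "premaniplex n FX adjX" and hom: "tsharp \<in> hom (Cox n) (Cox n)"
begin

lemma twist_adj_closed: "i < n \<Longrightarrow> x \<in> FX \<Longrightarrow> twist_adj n adjX tsharp i x \<in> FX"
  unfolding twist_adj_def cox_gen_eq_cls
  using hom_in_carrier[OF hom] cox_act_closed[OF X] cls_in_carrier[of "[i]" n] by auto

lemma twist_word_act:
  "set w \<subseteq> {..<n} \<Longrightarrow> x \<in> FX \<Longrightarrow>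
    word_act (twist_adj n adjX tsharp) w x = cox_act adjX (tsharp (cls n w)) x"
proof (induction w)
  case Nil
  have one: "cls n [] \<in> carrier (Cox n)" using cls_in_carrier by fastforce
  have "tsharp (cls n []) \<otimes>\<^bsub>Cox n\<^esub> tsharp (cls n []) = tsharp (cls n [])"
    using hom_mult[OF hom one one] Cox_mult_cls[of n "[]" "[]"] by simp
  moreover have "tsharp (cls n []) \<in> carrier (Cox n)" using hom_in_carrier[OF hom one] .
  ultimately show ?case using cox_act_idem[OF X] Nil by (simp add: word_act_def)
next
  case (Cons i w)
  have ci: "cls n [i] \<in> carrier (Cox n)" and cw: "cls n w \<in> carrier (Cox n)"
    using Cons.prems cls_in_carrier by auto
  then have "tsharp (cls n (i # w)) = tsharp (cls n [i]) \<otimes>\<^bsub>Cox n\<^esub> tsharp (cls n w)"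
    using hom_mult[OF hom ci cw] Cox_mult_cls[of n "[i]" w] by simp
  moreover have "tsharp (cls n [i]) \<in> carrier (Cox n)" "tsharp (cls n w) \<in> carrier (Cox n)"
    using hom_in_carrier[OF hom] ci cw by auto
  ultimately show ?case
    using Cons cox_act_mult[OF X] by (simp add: word_act_Cons twist_adj_def cox_gen_eq_cls)
qed

lemma twist_iso_cox_act:
  assumes iso: "premaniplex_iso n FX adjX FX (twist_adj n adjX tsharp) \<psi>"
    and A: "A \<in> carrier (Cox n)" and x: "x \<in> FX"
  shows "\<psi> (cox_act adjX A x) = cox_act adjX (tsharp A) (\<psi> x)"
proof -
  obtain w where w: "set w \<subseteq> {..<n}" "A = cls n w" using A carrier_Cox_iff by blast
  have "\<psi> x \<in> FX" using iso x by (auto simp: premaniplex_iso_def bij_betw_def)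
  then show ?thesis
    using w x premaniplex_iso_word_act[OF iso X] twist_word_act cox_act_cls[OF X] by simp
qed

end

lemma lifts_map_prod:
  assumes aut: "premaniplex_aut m FY adjY \<tau>"
    and bij: "bij_betw \<psi> FX FX"
    and compat: "\<And>i x y. i < m \<Longrightarrow> x \<in> FX \<Longrightarrow> y \<in> FY \<Longrightarrow>
      \<psi> (cox_act adjX (\<eta> (y, cox_gen m i)) x) = cox_act adjX (\<eta> (\<tau> y, cox_gen m i)) (\<psi> x)"
  shows "lifts m FX adjX FY adjY \<eta> \<tau>"
  unfolding lifts_def
proof (intro exI conjI ballI)
  show "premaniplex_aut m (FX \<times> FY) (prod_adj m adjX adjY \<eta>) (map_prod \<psi> \<tau>)"
    using aut bij bij_betw_map_prod compat
    by (auto simp: premaniplex_aut_def premaniplex_iso_def prod_adj_def)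
qed simp

theorem proposition6p4:
  fixes n m :: nat
    and FX :: "'a set" and adjX :: "nat \<Rightarrow> 'a \<Rightarrow> 'a"
    and FY :: "'b set" and adjY :: "nat \<Rightarrow> 'b \<Rightarrow> 'b"
    and \<eta> :: "'b \<times> nat list set \<Rightarrow> nat list set"
    and \<tau> :: "'b \<Rightarrow> 'b"
    and tsharp :: "nat list set \<Rightarrow> nat list set"
  assumes X: "premaniplex n FX adjX"
    and Y: "voltage_operator n m FY adjY \<eta>"
    and aut: "premaniplex_aut m FY adjY \<tau>"
    and hom: "tsharp \<in> hom (Cox n) (Cox n)"
    and compat: "\<forall>W\<in>fund_groupoid m FY. tsharp (\<eta> W) = \<eta> (path_map \<tau> W)"
    and iso: "premaniplex_isomorphic n FX (twist_adj n adjX tsharp) FX adjX"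
  shows "lifts m FX adjX FY adjY \<eta> \<tau>"
proof -
  have volt: "voltage_assignment n m FY adjY \<eta>" using Y by (simp add: voltage_operator_def)
  obtain \<phi> where "premaniplex_iso n FX (twist_adj n adjX tsharp) FX adjX \<phi>"
    using iso by (auto simp: premaniplex_isomorphic_def)
  then have \<psi>: "premaniplex_iso n FX adjX FX (twist_adj n adjX tsharp) (inv_into FX \<phi>)"
    using premaniplex_iso_inv_into twist_adj_closed[OF X hom] by blast
  show ?thesis
  proof (rule lifts_map_prod[OF aut])
    show "bij_betw (inv_into FX \<phi>) FX FX" using \<psi> by (simp add: premaniplex_iso_def)
    fix i x y assume "i < m" "x \<in> FX" "y \<in> FY"
    moreover from this have W: "(y, cox_gen m i) \<in> fund_groupoid m FY"
      using cls_in_carrier[of "[i]" m] by (simp add: fund_groupoid_def cox_gen_eq_cls)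
    moreover have "\<eta> (y, cox_gen m i) \<in> carrier (Cox n)"
      using volt W by (simp add: voltage_assignment_def)
    ultimately show "inv_into FX \<phi> (cox_act adjX (\<eta> (y, cox_gen m i)) x) =
        cox_act adjX (\<eta> (\<tau> y, cox_gen m i)) (inv_into FX \<phi> x)"
      using twist_iso_cox_act[OF X hom \<psi>] compat by (simp add: path_map_def)
  qed
qed

end
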